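(* Let $\omega$ be a weight function with associated weight matrix $\{W^x\}_{x>0}$. If there exist $x,y>0$ and $A>0$ with $\sum_{\ell\ge k}\frac1{\vartheta^y_\ell}\le A\frac{k}{\vartheta^x_k}$ for all $k\in\mathbb{N}_{>0}$, then $\omega$ is strong.
   Context: A weight function is a continuous increasing $\omega:[0,\infty)\to[0,\infty)$ with $\omega(0)=0$, $\omega(t)\to\infty$, $\omega(2t)=O(\omega(t))$, $\omega(t)=O(t)$, $\log t=o(\omega(t))$, and $\varphi(t)=\omega(e^t)$ convex; normalized with $\omega|_{[0,1]}=0$, $\varphi^*(t)=\sup_{s\ge0}(st-\varphi(s))$, $W^x_k=\exp(\frac1x\varphi^*(xk))$, $\vartheta^x_k=W^x_k/W^x_{k-1}$. $\omega$ is strong if there is $C>0$ with $\int_1^\infty\frac{\omega(tu)}{u^2}du\le C\omega(t)+C$ for all $t>0$. *)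

theory Defs
  imports "HOL-Analysis.Analysis" "HOL-Library.Landau_Symbols"
begin

definition weight_function :: "(real \<Rightarrow> real) \<Rightarrow> bool" where
  "weight_function \<omega> \<longleftrightarrow>
     continuous_on {0..} \<omega> \<and>
     mono_on {0..} \<omega> \<and>
     (\<forall>t\<ge>0. \<omega> t \<ge> 0) \<and>
     \<omega> 0 = 0 \<and>
     filterlim \<omega> at_top at_top \<and>
     (\<lambda>t. \<omega> (2 * t)) \<in> O[at_top](\<omega>) \<and>
     \<omega> \<in> O[at_top](\<lambda>t. t) \<and>
     ln \<in> o[at_top](\<omega>) \<and>
     convex_on UNIV (\<lambda>t. \<omega> (exp t))"

definition normalized_weight :: "(real \<Rightarrow> real) \<Rightarrow> bool" where
  "normalized_weight \<omega> \<longleftrightarrow> (\<forall>t\<in>{0..1}. \<omega> t = 0)"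

definition wphi :: "(real \<Rightarrow> real) \<Rightarrow> real \<Rightarrow> real" where
  "wphi \<omega> t = \<omega> (exp t)"

definition wphi_star :: "(real \<Rightarrow> real) \<Rightarrow> real \<Rightarrow> real" where
  "wphi_star \<omega> t = (SUP s\<in>{0..}. s * t - wphi \<omega> s)"

definition wmat :: "(real \<Rightarrow> real) \<Rightarrow> real \<Rightarrow> nat \<Rightarrow> real" where
  "wmat \<omega> x k = exp (wphi_star \<omega> (x * real k) / x)"

text \<open>theta^x_k = W^x_k / W^x_{k-1} (used for k >= 1)\<close>
definition wtheta :: "(real \<Rightarrow> real) \<Rightarrow> real \<Rightarrow> nat \<Rightarrow> real" where
  "wtheta \<omega> x k = wmat \<omega> x k / wmat \<omega> x (k - 1)"

definition strong_weight :: "(real \<Rightarrow> real) \<Rightarrow> bool" where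
  "strong_weight \<omega> \<longleftrightarrow> (\<exists>C>0. \<forall>t>0.
     (\<integral>\<^sup>+ u. ennreal (\<omega> (t * u) / u\<^sup>2) * indicator {1..} u \<partial>lborel)
       \<le> ennreal (C * \<omega> t + C))"

end

theory Submission
  imports Defs
begin

text \<open>Write \<open>\<mu>\<^sub>l = ln \<vartheta>\<^sup>y\<^sub>l\<^sub>+\<^sub>1\<close>; convexity of \<open>\<phi>\<close> makes \<open>\<mu>\<close> nondecreasing. The associated weight
  \<open>\<omega>\<^sub>y(v) = \<Sum>\<^sub>l (ln v - \<mu>\<^sub>l)\<^sup>+\<close> of \<open>W\<^sup>y\<close> satisfies \<open>y \<omega>\<^sub>y \<le> \<omega> \<le> 4 y \<omega>\<^sub>y + C\<close>; the upper bound comes from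
  Young's inequality at an approximate subgradient of \<open>\<phi>\<close> and from \<open>\<omega>(e v) = O(\<omega>(v))\<close>.
  Bounding each \<open>(ln (t u) - \<mu>\<^sub>l)\<^sup>+\<close> by the number of integers \<open>j \<ge> 0\<close> with \<open>exp (\<mu>\<^sub>l + j) \<le> t u\<close> makes the
  integral \<open>\<integral>\<^sub>1\<^sup>\<infinity> \<omega>(t u)/u\<^sup>2 du\<close> computable termwise: it is at most \<open>C + 4 y \<Sum>\<^sub>l \<Sum>\<^sub>j min 1 (t exp (- \<mu>\<^sub>l - j))\<close>.
  Summing over \<open>j\<close> leaves \<open>(ln (e t) - \<mu>\<^sub>l)\<^sup>+ + 2 min 1 (t / \<vartheta>\<^sup>y\<^sub>l\<^sub>+\<^sub>1)\<close>. The first terms add up to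
  \<open>\<omega>\<^sub>y(e t) \<le> \<omega>(e t) / y\<close>; the second ones are controlled by the hypothesis at the first index \<open>k\<close>
  with \<open>\<vartheta>\<^sup>x\<^sub>k > t\<close>, and \<open>x k \<le> \<omega>(e t)\<close>. Finally \<open>\<omega>(e t) \<le> D \<omega>(t) + D\<close>.\<close>

section \<open>Integrals and series\<close>

lemma nn_integral_inverse_square_atLeast:
  assumes c: "c > 0"
  shows "(\<integral>\<^sup>+ u. ennreal (1 / u\<^sup>2) * indicator {c..} u \<partial>lborel) = ennreal (1 / c)"
proof -
  have "((\<lambda>u. 1 / u ^ 2) has_integral 1 / (real (2 - 1) * c ^ (2 - 1))) {c..}"
    using c by (intro has_integral_inverse_power_to_inf) auto
  then have "((\<lambda>u. 1 / u\<^sup>2) has_integral 1 / c) {c..}" by simp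
  from nn_integral_has_integral_lebesgue'[OF _ this] show ?thesis by auto
qed

lemma nn_integral_majorant:
  assumes c: "\<And>l j. c l j > 0" and C: "C \<ge> 0"
  shows "(\<integral>\<^sup>+ u. ennreal (C / u\<^sup>2) * indicator {1..} u +
      ennreal a * (\<Sum>l. \<Sum>j. ennreal (1 / u\<^sup>2) * indicator {c l j..} u) \<partial>lborel)
    = ennreal C + ennreal a * (\<Sum>l. \<Sum>j. ennreal (1 / c l j))"
proof -
  have "(\<integral>\<^sup>+ u. ennreal (C / u\<^sup>2) * indicator {1..} u \<partial>lborel)
      = (\<integral>\<^sup>+ u. ennreal C * (ennreal (1 / u\<^sup>2) * indicator {1..} u) \<partial>lborel)"
  proof (intro nn_integral_cong)
    fix u :: real
    have "ennreal (C / u\<^sup>2) = ennreal C * ennreal (1 / u\<^sup>2)"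
      using C by (simp add: ennreal_mult[symmetric])
    then show "ennreal (C / u\<^sup>2) * indicator {1..} u = ennreal C * (ennreal (1 / u\<^sup>2) * indicator {1..} u)"
      by (simp add: mult.assoc)
  qed
  also have "\<dots> = ennreal C"
    using nn_integral_inverse_square_atLeast[of 1] by (subst nn_integral_cmult) auto
  finally have first: "(\<integral>\<^sup>+ u. ennreal (C / u\<^sup>2) * indicator {1..} u \<partial>lborel) = ennreal C" .
  have "(\<integral>\<^sup>+ u. (\<Sum>l. \<Sum>j. ennreal (1 / u\<^sup>2) * indicator {c l j..} u) \<partial>lborel)
      = (\<Sum>l. \<Sum>j. \<integral>\<^sup>+ u. ennreal (1 / u\<^sup>2) * indicator {c l j..} u \<partial>lborel)"
  proof -
    have "(\<lambda>u. \<Sum>j. ennreal (1 / u\<^sup>2) * indicator {c l j..} u) \<in> borel_measurable lborel" for l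
      by measurable
    then have "(\<integral>\<^sup>+ u. (\<Sum>l. \<Sum>j. ennreal (1 / u\<^sup>2) * indicator {c l j..} u) \<partial>lborel)
        = (\<Sum>l. \<integral>\<^sup>+ u. (\<Sum>j. ennreal (1 / u\<^sup>2) * indicator {c l j..} u) \<partial>lborel)"
      by (intro nn_integral_suminf) auto
    also have "\<dots> = (\<Sum>l. \<Sum>j. \<integral>\<^sup>+ u. ennreal (1 / u\<^sup>2) * indicator {c l j..} u \<partial>lborel)"
      by (intro suminf_cong nn_integral_suminf) measurable
    finally show ?thesis .
  qed
  also have "\<dots> = (\<Sum>l. \<Sum>j. ennreal (1 / c l j))"
    using c by (simp add: nn_integral_inverse_square_atLeast)
  finally show ?thesis
    by (subst nn_integral_add) (auto simp: first nn_integral_cmult)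
qed

lemma ennreal_max_0_le_count:
  "ennreal (max 0 z) \<le> (\<Sum>j. if real j \<le> z then 1 else 0)"
proof (cases "z \<ge> 0")
  case True
  have "(\<Sum>j. if real j \<le> z then 1 else (0::ennreal)) = (\<Sum>j\<le>nat \<lfloor>z\<rfloor>. if real j \<le> z then 1 else 0)"
  proof (rule suminf_finite)
    fix n assume "n \<notin> {..nat \<lfloor>z\<rfloor>}"
    then have "real n > z" using True by (simp add: not_le) linarith
    then show "(if real n \<le> z then 1 else (0::ennreal)) = 0" by simp
  qed auto
  also have "\<dots> = (\<Sum>j\<le>nat \<lfloor>z\<rfloor>. (1::ennreal))"
    using True by (intro sum.cong) (auto simp: le_nat_iff le_floor_iff)
  also have "\<dots> = ennreal (real (nat \<lfloor>z\<rfloor> + 1))" by (simp add: ennreal_of_nat_eq_real_of_nat)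
  finally have eq: "(\<Sum>j. if real j \<le> z then 1 else (0::ennreal)) = ennreal (real (nat \<lfloor>z\<rfloor> + 1))" .
  have "real (nat \<lfloor>z\<rfloor> + 1) = of_int \<lfloor>z\<rfloor> + 1" using True by simp
  then have "z \<le> real (nat \<lfloor>z\<rfloor> + 1)" using real_of_int_floor_add_one_gt[of z] by linarith
  moreover have "max 0 z = z" using True by simp
  ultimately show ?thesis unfolding eq by (metis ennreal_leI)
qed simp

lemma min_1_exp_diff_summable_le:
  fixes c :: real
  shows "summable (\<lambda>j. min 1 (exp (c - real j)))"
    and "(\<Sum>j. min 1 (exp (c - real j))) \<le> max 0 (c + 1) + 2 * min 1 (exp c)"
proof -
  define f where "f j = min 1 (exp (c - real j))" for j :: nat
  define q where "q = exp (-1::real)"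
  have q: "0 < q" "q \<le> 1 / 2"
    unfolding q_def using exp_ge_add_one_self[of 1] by (auto simp: exp_minus field_simps)
  have exp_q: "exp (a - real j) = exp a * q ^ j" for a j
    unfolding q_def by (simp add: exp_diff exp_minus exp_of_nat_mult[symmetric] field_simps power_divide)
  have geometric: "summable (\<lambda>j. exp a * q ^ j)" for a using q by (intro summable_mult) auto
  have "norm (f j) \<le> exp c * q ^ j" for j
    using q by (simp add: f_def exp_q abs_of_nonneg)
  then show summable: "summable f"
    by (intro summable_comparison_test[OF _ geometric[of c]]) auto
  define m where "m = nat \<lceil>c\<rceil>"
  have "(\<Sum>j<m. f j) \<le> (\<Sum>j<m. (1::real))" unfolding f_def by (intro sum_mono) auto
  also have "\<dots> \<le> max 0 (c + 1)"
  proof (cases "c \<le> 0")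
    case False
    then have "real m = of_int \<lceil>c\<rceil>" unfolding m_def by simp
    then show ?thesis using ceiling_correct[of c] by simp
  qed (simp add: m_def)
  finally have head: "(\<Sum>j<m. f j) \<le> max 0 (c + 1)" .
  have "(\<Sum>i. f (i + m)) \<le> (\<Sum>i. exp (c - real m) * q ^ i)"
  proof (rule suminf_le)
    fix i
    have "f (i + m) \<le> exp ((c - real m) - real i)" unfolding f_def by (simp add: algebra_simps)
    then show "f (i + m) \<le> exp (c - real m) * q ^ i" by (simp add: exp_q)
  qed (use summable geometric in auto)
  also have "\<dots> = exp (c - real m) * (1 / (1 - q))"
    using q by (simp add: suminf_mult suminf_geometric)
  also have "\<dots> \<le> min 1 (exp c) * 2"
  proof (intro mult_mono)
    have "c \<le> real m" unfolding m_def by linarith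
    then show "exp (c - real m) \<le> min 1 (exp c)" by simp
    show "1 / (1 - q) \<le> 2" using q by (simp add: field_simps)
  qed (use q in auto)
  finally have tail: "(\<Sum>i. f (i + m)) \<le> 2 * min 1 (exp c)" by simp
  show "(\<Sum>j. min 1 (exp (c - real j))) \<le> max 0 (c + 1) + 2 * min 1 (exp c)"
    using suminf_split_initial_segment[OF summable, of m] head tail unfolding f_def by simp
qed

section \<open>Weight functions and the Young conjugate\<close>

locale normalized_weight_function =
  fixes \<omega> :: "real \<Rightarrow> real"
  assumes weight: "weight_function \<omega>" and normalized: "normalized_weight \<omega>"
begin

lemma omega_mono: "0 \<le> a \<Longrightarrow> a \<le> b \<Longrightarrow> \<omega> a \<le> \<omega> b"
  using weight unfolding weight_function_def mono_on_def by auto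

lemma omega_nonneg: "0 \<le> a \<Longrightarrow> 0 \<le> \<omega> a"
  using weight unfolding weight_function_def by auto

lemma omega_eq_0: "0 \<le> a \<Longrightarrow> a \<le> 1 \<Longrightarrow> \<omega> a = 0"
  using normalized unfolding normalized_weight_def by auto

lemma wphi_mono: "a \<le> b \<Longrightarrow> wphi \<omega> a \<le> wphi \<omega> b"
  unfolding wphi_def by (intro omega_mono) auto

lemma wphi_nonneg: "0 \<le> wphi \<omega> a"
  unfolding wphi_def by (intro omega_nonneg) auto

lemma wphi_0: "wphi \<omega> 0 = 0"
  unfolding wphi_def by (intro omega_eq_0) auto

lemma convex_wphi: "convex_on UNIV (wphi \<omega>)"
  using weight unfolding weight_function_def wphi_def[abs_def] by auto

lemma omega_exp1_mult_le: "\<exists>D\<ge>1. \<forall>v\<ge>0. \<omega> (exp 1 * v) \<le> D * \<omega> v + D"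
proof -
  have "(\<lambda>t. \<omega> (2 * t)) \<in> O[at_top](\<omega>)"
    using weight unfolding weight_function_def by auto
  then obtain c where c: "c > 0"
    and "eventually (\<lambda>t. norm (\<omega> (2 * t)) \<le> c * norm (\<omega> t)) at_top"
    by (auto elim!: landau_o.bigE)
  then obtain T where T: "\<And>t. t \<ge> T \<Longrightarrow> norm (\<omega> (2 * t)) \<le> c * norm (\<omega> t)"
    by (auto simp: eventually_at_top_linorder)
  define K where "K = \<omega> (2 * max T 0)"
  have K: "K \<ge> 0" unfolding K_def by (intro omega_nonneg) auto
  have double: "\<omega> (2 * t) \<le> c * \<omega> t + K" if "t \<ge> 0" for t
  proof (cases "t \<ge> T")
    case True
    then show ?thesis using T[OF True] omega_nonneg[of t] omega_nonneg[of "2 * t"] that K by auto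
  next
    case False
    then have "\<omega> (2 * t) \<le> K" unfolding K_def using that by (intro omega_mono) auto
    then show ?thesis using c omega_nonneg[OF that] by (smt (verit) mult_nonneg_nonneg)
  qed
  define D where "D = c * c + c * K + K + 1"
  have "\<omega> (exp 1 * v) \<le> D * \<omega> v + D" if v: "v \<ge> 0" for v
  proof -
    have "exp (1::real) \<le> 2 * 2"
      using exp_le by linarith
    then have "\<omega> (exp 1 * v) \<le> \<omega> (2 * (2 * v))"
      using v by (intro omega_mono) (auto intro: mult_right_mono)
    also have "\<dots> \<le> c * \<omega> (2 * v) + K" using double[of "2 * v"] v by auto
    also have "\<dots> \<le> c * (c * \<omega> v + K) + K"
      using double[OF v] c by (intro add_mono mult_left_mono) auto
    also have "\<dots> \<le> D * \<omega> v + D"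
      unfolding D_def using omega_nonneg[OF v] c K by (simp add: algebra_simps)
    finally show ?thesis .
  qed
  moreover have "D \<ge> 1" unfolding D_def using c K by simp
  ultimately show ?thesis by blast
qed

lemma ln_le_omega: assumes "e > 0" shows "\<exists>C. \<forall>v\<ge>1. ln v \<le> e * \<omega> v + C"
proof -
  have "ln \<in> o[at_top](\<omega>)" using weight unfolding weight_function_def by auto
  from landau_o.smallD[OF this assms]
  obtain T where T: "\<And>v. v \<ge> T \<Longrightarrow> norm (ln v) \<le> e * norm (\<omega> v)"
    by (auto simp: eventually_at_top_linorder)
  have "ln v \<le> e * \<omega> v + ln (max T 1)" if "v \<ge> 1" for v
  proof (cases "v \<ge> T")
    case True
    then have "ln v \<le> e * \<omega> v" using T[of v] that omega_nonneg[of v] by simp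
    moreover have "0 \<le> ln (max T 1)" by simp
    ultimately show ?thesis by linarith
  next
    case False
    then have "ln v \<le> ln (max T 1)" using that by simp
    moreover have "0 \<le> e * \<omega> v" using that assms omega_nonneg[of v] by simp
    ultimately show ?thesis by linarith
  qed
  then show ?thesis by blast
qed

lemma bdd_above_young: assumes "\<tau> \<ge> 0" shows "bdd_above ((\<lambda>s. s * \<tau> - wphi \<omega> s) ` {0..})"
proof -
  obtain C where C: "\<And>v. v \<ge> 1 \<Longrightarrow> ln v \<le> \<omega> v / (\<tau> + 1) + C"
    using ln_le_omega[of "1 / (\<tau> + 1)"] assms by auto
  have "s * \<tau> - wphi \<omega> s \<le> (\<tau> + 1) * C" if "s \<ge> 0" for s
  proof -
    have "s \<le> wphi \<omega> s / (\<tau> + 1) + C" using C[of "exp s"] that by (simp add: wphi_def)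
    then have "(\<tau> + 1) * s \<le> wphi \<omega> s + (\<tau> + 1) * C" using assms by (simp add: field_simps)
    then show ?thesis using that by (simp add: algebra_simps)
  qed
  then show ?thesis unfolding bdd_above_def by blast
qed

lemma young_ineq: "\<tau> \<ge> 0 \<Longrightarrow> s \<ge> 0 \<Longrightarrow> s * \<tau> - wphi \<omega> s \<le> wphi_star \<omega> \<tau>"
  unfolding wphi_star_def by (rule cSUP_upper[OF _ bdd_above_young]) auto

lemma wphi_star_le: "(\<And>s. s \<ge> 0 \<Longrightarrow> s * \<tau> - wphi \<omega> s \<le> B) \<Longrightarrow> wphi_star \<omega> \<tau> \<le> B"
  unfolding wphi_star_def by (rule cSUP_least) auto

lemma wphi_star_0: "wphi_star \<omega> 0 = 0"
proof (rule antisym)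
  show "wphi_star \<omega> 0 \<le> 0" by (rule wphi_star_le) (use wphi_nonneg in auto)
  show "0 \<le> wphi_star \<omega> 0" using young_ineq[of 0 0] wphi_0 by simp
qed

lemma wphi_star_mono: assumes "0 \<le> a" "a \<le> b" shows "wphi_star \<omega> a \<le> wphi_star \<omega> b"
proof (rule wphi_star_le)
  fix s :: real assume "s \<ge> 0"
  then have "s * a - wphi \<omega> s \<le> s * b - wphi \<omega> s" using assms by (simp add: mult_left_mono)
  also have "\<dots> \<le> wphi_star \<omega> b" using young_ineq[of b s] assms \<open>s \<ge> 0\<close> by simp
  finally show "s * a - wphi \<omega> s \<le> wphi_star \<omega> b" .
qed

lemma wphi_star_midpoint:
  assumes "0 \<le> a" "0 \<le> b"
  shows "2 * wphi_star \<omega> ((a + b) / 2) \<le> wphi_star \<omega> a + wphi_star \<omega> b"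
proof -
  have "wphi_star \<omega> ((a + b) / 2) \<le> (wphi_star \<omega> a + wphi_star \<omega> b) / 2"
  proof (rule wphi_star_le)
    fix s :: real assume s: "s \<ge> 0"
    have "s * ((a + b) / 2) - wphi \<omega> s = ((s * a - wphi \<omega> s) + (s * b - wphi \<omega> s)) / 2"
      by (simp add: field_simps)
    also have "\<dots> \<le> (wphi_star \<omega> a + wphi_star \<omega> b) / 2"
      using young_ineq[OF assms(1) s] young_ineq[OF assms(2) s] by simp
    finally show "s * ((a + b) / 2) - wphi \<omega> s \<le> (wphi_star \<omega> a + wphi_star \<omega> b) / 2" .
  qed
  then show ?thesis by simp
qed

definition log_wtheta :: "real \<Rightarrow> nat \<Rightarrow> real" where
  "log_wtheta z l = (wphi_star \<omega> (z * real (Suc l)) - wphi_star \<omega> (z * real l)) / z"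

lemma wtheta_Suc: "z > 0 \<Longrightarrow> wtheta \<omega> z (Suc l) = exp (log_wtheta z l)"
  unfolding wtheta_def wmat_def log_wtheta_def
  by (simp add: exp_diff[symmetric] diff_divide_distrib)

lemma log_wtheta_nonneg: "z > 0 \<Longrightarrow> 0 \<le> log_wtheta z l"
  unfolding log_wtheta_def by (intro divide_nonneg_pos) (auto intro!: wphi_star_mono)

lemma mono_log_wtheta: assumes z: "z > 0" shows "mono (log_wtheta z)"
proof (rule incseq_SucI)
  fix l
  have "2 * wphi_star \<omega> ((z * real l + z * real (Suc (Suc l))) / 2)
      \<le> wphi_star \<omega> (z * real l) + wphi_star \<omega> (z * real (Suc (Suc l)))"
    using z by (intro wphi_star_midpoint) auto
  moreover have "(z * real l + z * real (Suc (Suc l))) / 2 = z * real (Suc l)"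
    by (simp add: field_simps)
  ultimately show "log_wtheta z l \<le> log_wtheta z (Suc l)"
    unfolding log_wtheta_def using z by (intro divide_right_mono) auto
qed

lemma sum_log_wtheta: "z > 0 \<Longrightarrow> (\<Sum>l<k. log_wtheta z l) = wphi_star \<omega> (z * real k) / z"
  by (induction k) (auto simp: log_wtheta_def wphi_star_0 field_simps)

lemma sum_ln_minus_log_wtheta_le:
  assumes z: "z > 0" and v: "v \<ge> 1"
  shows "z * (\<Sum>l<k. ln v - log_wtheta z l) \<le> \<omega> v"
proof -
  have "ln v * (z * real k) - wphi \<omega> (ln v) \<le> wphi_star \<omega> (z * real k)"
    using z v by (intro young_ineq) auto
  moreover have "wphi \<omega> (ln v) = \<omega> v" using v by (simp add: wphi_def)
  ultimately show ?thesis
    using z by (simp add: sum_subtractf sum_log_wtheta algebra_simps)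
qed

lemma log_wtheta_sublevel: assumes z: "z > 0" shows "\<exists>N. \<forall>l. log_wtheta z l \<le> s \<longleftrightarrow> l < N"
proof -
  define S where "S = {m. \<forall>l<m. log_wtheta z l \<le> s}"
  define v where "v = exp (\<bar>s\<bar> + 1)"
  have "real m \<le> \<omega> v / z" if "m \<in> S" for m
  proof -
    have "(\<Sum>l<m. (1::real)) \<le> (\<Sum>l<m. ln v - log_wtheta z l)"
      using that unfolding S_def v_def by (intro sum_mono) auto
    then have "z * real m \<le> z * (\<Sum>l<m. ln v - log_wtheta z l)"
      using z by (intro mult_left_mono) auto
    also have "\<dots> \<le> \<omega> v" using z unfolding v_def by (intro sum_ln_minus_log_wtheta_le) auto
    finally show ?thesis using z by (simp add: field_simps)
  qed
  then have "S \<subseteq> {..nat \<lceil>\<omega> v / z\<rceil>}"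
  proof (intro subsetI)
    fix m assume "m \<in> S"
    then have "real m \<le> \<omega> v / z" by fact
    then show "m \<in> {..nat \<lceil>\<omega> v / z\<rceil>}" by (simp add: nat_le_iff) linarith
  qed
  then have fin: "finite S" by (rule finite_subset) auto
  define N where "N = Max S"
  have N: "N \<in> S" unfolding N_def using fin by (intro Max_in) (auto simp: S_def)
  have "log_wtheta z l \<le> s \<longleftrightarrow> l < N" for l
  proof
    assume l: "log_wtheta z l \<le> s"
    have "Suc l \<in> S" unfolding S_def
    proof (intro CollectI allI impI)
      fix i assume "i < Suc l"
      then have "log_wtheta z i \<le> log_wtheta z l" using mono_log_wtheta[OF z] by (simp add: monoD)
      then show "log_wtheta z i \<le> s" using l by linarith
    qed
    then have "Suc l \<le> N" unfolding N_def using fin by (intro Max_ge)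
    then show "l < N" by simp
  qed (use N S_def in auto)
  then show ?thesis by blast
qed

section \<open>The associated weight\<close>

text \<open>The associated weight \<open>\<omega>\<^sub>z(v) = sup\<^sub>k ln (v\<^sup>k / W\<^sup>z\<^sub>k)\<close> of \<open>W\<^sup>z\<close>, written as a series whose
  terms vanish from some index on.\<close>

definition assoc_weight :: "real \<Rightarrow> real \<Rightarrow> real" where
  "assoc_weight z v = (\<Sum>l. max 0 (ln v - log_wtheta z l))"

lemma max_0_diff_log_wtheta_sums:
  assumes z: "z > 0" and N: "\<And>l. log_wtheta z l \<le> s \<longleftrightarrow> l < N"
  shows "(\<lambda>l. max 0 (s - log_wtheta z l)) sums (\<Sum>l<N. s - log_wtheta z l)"
proof -
  have "(\<lambda>l. max 0 (s - log_wtheta z l)) sums (\<Sum>l<N. max 0 (s - log_wtheta z l))"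
  proof (rule sums_finite)
    fix l assume "l \<notin> {..<N}"
    then have "s < log_wtheta z l" using N[of l] by auto
    then show "max 0 (s - log_wtheta z l) = 0" by simp
  qed simp
  moreover have "(\<Sum>l<N. max 0 (s - log_wtheta z l)) = (\<Sum>l<N. s - log_wtheta z l)"
    using N by (intro sum.cong) auto
  ultimately show ?thesis by simp
qed

lemma summable_max_0_diff_log_wtheta:
  assumes "z > 0" shows "summable (\<lambda>l. max 0 (s - log_wtheta z l))"
proof -
  obtain N where "\<And>l. log_wtheta z l \<le> s \<longleftrightarrow> l < N"
    using log_wtheta_sublevel[OF assms] by blast
  from max_0_diff_log_wtheta_sums[OF assms this] show ?thesis by (rule sums_summable)
qed

lemma assoc_weight_nonneg: "z > 0 \<Longrightarrow> 0 \<le> assoc_weight z v"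
  unfolding assoc_weight_def by (intro suminf_nonneg summable_max_0_diff_log_wtheta) auto

lemma assoc_weight_le_omega:
  assumes z: "z > 0" and v: "v > 0"
  shows "z * assoc_weight z v \<le> \<omega> v"
proof (cases "v \<ge> 1")
  case True
  obtain N where N: "\<And>l. log_wtheta z l \<le> ln v \<longleftrightarrow> l < N"
    using log_wtheta_sublevel[OF z] by blast
  have "assoc_weight z v = (\<Sum>l<N. ln v - log_wtheta z l)"
    unfolding assoc_weight_def using max_0_diff_log_wtheta_sums[OF z N] by (rule sums_unique[symmetric])
  then show ?thesis using sum_ln_minus_log_wtheta_le[OF z True] by simp
next
  case False
  then have "ln v < 0" using v by simp
  then have "max 0 (ln v - log_wtheta z l) = 0" for l
    using log_wtheta_nonneg[OF z, of l] by simp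
  then show ?thesis unfolding assoc_weight_def using v by (simp add: omega_nonneg)
qed

lemma log_wtheta_sublevel_index_le:
  assumes z: "z > 0" and t: "t > 0"
  obtains M where "\<And>l. log_wtheta z l \<le> ln t \<longleftrightarrow> l < M" and "z * real M \<le> \<omega> (exp 1 * t)"
proof -
  obtain M where M: "\<And>l. log_wtheta z l \<le> ln t \<longleftrightarrow> l < M"
    using log_wtheta_sublevel[OF z] by blast
  have "real M = (\<Sum>l<M. 1)" by simp
  also have "\<dots> \<le> (\<Sum>l<M. max 0 (ln (exp 1 * t) - log_wtheta z l))"
  proof (intro sum_mono)
    fix l assume "l \<in> {..<M}"
    then have "log_wtheta z l \<le> ln t" using M by simp
    then show "1 \<le> max 0 (ln (exp 1 * t) - log_wtheta z l)" using t by (simp add: ln_mult)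
  qed
  also have "\<dots> \<le> assoc_weight z (exp 1 * t)"
    unfolding assoc_weight_def using z by (intro sum_le_suminf summable_max_0_diff_log_wtheta) auto
  finally have "z * real M \<le> z * assoc_weight z (exp 1 * t)"
    using z by (intro mult_left_mono) auto
  also have "\<dots> \<le> \<omega> (exp 1 * t)" using assoc_weight_le_omega[OF z, of "exp 1 * t"] t by simp
  finally show ?thesis using M that by blast
qed

text \<open>The chord slope \<open>\<tau>\<close> of \<open>\<phi>\<close> on \<open>[s\<^sub>0, s\<^sub>0 + h]\<close> is an approximate subgradient at \<open>s\<^sub>0\<close>,
  so Young's inequality for the pair \<open>(s\<^sub>0, \<tau>)\<close> is sharp up to \<open>h \<tau>\<close>.\<close>

lemma wphi_star_chord_slope_le:
  fixes s\<^sub>0 h :: real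
  assumes h: "h > 0"
  defines "\<tau> \<equiv> (wphi \<omega> (s\<^sub>0 + h) - wphi \<omega> s\<^sub>0) / h"
  shows "wphi_star \<omega> \<tau> \<le> s\<^sub>0 * \<tau> - wphi \<omega> s\<^sub>0 + h * \<tau>"
proof (rule wphi_star_le)
  have \<tau>: "\<tau> \<ge> 0" unfolding \<tau>_def using h wphi_mono[of s\<^sub>0 "s\<^sub>0 + h"] by auto
  have slope: "\<tau> = (wphi \<omega> s\<^sub>0 - wphi \<omega> (s\<^sub>0 + h)) / (s\<^sub>0 - (s\<^sub>0 + h))"
    unfolding \<tau>_def using h by (simp add: field_simps)
  note convex = convex_on_slope_le[OF convex_wphi]
  fix s :: real
  consider "s < s\<^sub>0" | "s\<^sub>0 \<le> s" "s \<le> s\<^sub>0 + h" | "s > s\<^sub>0 + h" by linarith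
  then show "s * \<tau> - wphi \<omega> s \<le> s\<^sub>0 * \<tau> - wphi \<omega> s\<^sub>0 + h * \<tau>"
  proof cases
    case 1
    have "(wphi \<omega> s - wphi \<omega> s\<^sub>0) / (s - s\<^sub>0) \<le> \<tau>"
      unfolding slope using convex[of s "s\<^sub>0 + h" s\<^sub>0] 1 h by auto
    then have "wphi \<omega> s\<^sub>0 - wphi \<omega> s \<le> \<tau> * (s\<^sub>0 - s)"
      using 1 by (simp add: divide_le_eq field_simps split: if_splits)
    then show ?thesis using h \<tau> by (simp add: algebra_simps) (smt (verit) mult_nonneg_nonneg)
  next
    case 2
    have "wphi \<omega> s\<^sub>0 \<le> wphi \<omega> s" using 2 by (intro wphi_mono)
    moreover have "s * \<tau> \<le> (s\<^sub>0 + h) * \<tau>" using 2 \<tau> by (intro mult_right_mono) auto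
    ultimately show ?thesis by (simp add: algebra_simps)
  next
    case 3
    have "\<tau> \<le> (wphi \<omega> s\<^sub>0 - wphi \<omega> s) / (s\<^sub>0 - s)"
      unfolding slope using convex(1)[of s\<^sub>0 s "s\<^sub>0 + h"] 3 h by auto
    also have "\<dots> = (wphi \<omega> s - wphi \<omega> s\<^sub>0) / (s - s\<^sub>0)"
      by (metis minus_diff_eq minus_divide_divide)
    finally have "\<tau> * (s - s\<^sub>0) \<le> wphi \<omega> s - wphi \<omega> s\<^sub>0"
      using 3 h by (simp add: le_divide_eq field_simps split: if_splits)
    then show ?thesis using h \<tau> by (simp add: algebra_simps) (smt (verit) mult_nonneg_nonneg)
  qed
qed

text \<open>The chord length \<open>h = 1/(2D)\<close> is chosen so that, by convexity and \<open>\<omega>(e v) \<le> D \<omega>(v) + D\<close>,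
  the error term \<open>h \<tau>\<close> is at most \<open>(\<omega>(v) + 1)/2\<close>.\<close>

lemma omega_le_young_gap:
  assumes v: "v \<ge> 1"
  shows "\<exists>\<tau>\<ge>0. \<omega> v \<le> 2 * (ln v * \<tau> - wphi_star \<omega> \<tau>) + 1"
proof -
  obtain D where D: "D \<ge> 1" "\<And>v. v \<ge> 0 \<Longrightarrow> \<omega> (exp 1 * v) \<le> D * \<omega> v + D"
    using omega_exp1_mult_le by auto
  define s\<^sub>0 where "s\<^sub>0 = ln v"
  define h where "h = 1 / (2 * D)"
  have h: "h > 0" "h \<le> 1" using D unfolding h_def by auto
  define \<tau> where "\<tau> = (wphi \<omega> (s\<^sub>0 + h) - wphi \<omega> s\<^sub>0) / h"
  have \<tau>: "\<tau> \<ge> 0" unfolding \<tau>_def using h wphi_mono[of s\<^sub>0 "s\<^sub>0 + h"] by auto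
  have "wphi \<omega> ((1 - h) * s\<^sub>0 + h * (s\<^sub>0 + 1)) \<le> (1 - h) * wphi \<omega> s\<^sub>0 + h * wphi \<omega> (s\<^sub>0 + 1)"
    using h convex_onD[OF convex_wphi, of h s\<^sub>0 "s\<^sub>0 + 1"] by simp
  moreover have "(1 - h) * s\<^sub>0 + h * (s\<^sub>0 + 1) = s\<^sub>0 + h" by (simp add: algebra_simps)
  moreover have "h * \<tau> = wphi \<omega> (s\<^sub>0 + h) - wphi \<omega> s\<^sub>0" unfolding \<tau>_def using h by simp
  moreover have "0 \<le> h * wphi \<omega> s\<^sub>0" using h wphi_nonneg[of s\<^sub>0] by simp
  ultimately have "h * \<tau> \<le> h * wphi \<omega> (s\<^sub>0 + 1)" by (simp add: algebra_simps)
  also have "wphi \<omega> (s\<^sub>0 + 1) = \<omega> (exp 1 * v)"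
    unfolding wphi_def s\<^sub>0_def using v by (simp add: exp_add mult.commute)
  also have "h * \<omega> (exp 1 * v) \<le> h * (D * \<omega> v + D)"
    using D(2)[of v] v h by (intro mult_left_mono) auto
  also have "\<dots> = (\<omega> v + 1) / 2" unfolding h_def using D by (simp add: field_simps)
  finally have error: "h * \<tau> \<le> (\<omega> v + 1) / 2" .
  have "\<omega> v = wphi \<omega> s\<^sub>0" unfolding wphi_def s\<^sub>0_def using v by simp
  also have "\<dots> \<le> s\<^sub>0 * \<tau> - wphi_star \<omega> \<tau> + h * \<tau>"
    using wphi_star_chord_slope_le[OF h(1), of s\<^sub>0] unfolding \<tau>_def by simp
  finally have "\<omega> v \<le> 2 * (ln v * \<tau> - wphi_star \<omega> \<tau>) + 1"
    using error unfolding s\<^sub>0_def by (simp add: field_simps)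
  with \<tau> show ?thesis by blast
qed

text \<open>Compare \<open>\<tau>\<close> with the lattice point \<open>y \<lfloor>\<tau> / y\<rfloor>\<close>.\<close>

lemma young_gap_le_assoc_weight:
  assumes y: "y > 0" and \<tau>: "\<tau> \<ge> 0" and v: "v \<ge> 1"
  shows "ln v * \<tau> - wphi_star \<omega> \<tau> \<le> y * assoc_weight y v + y * ln v"
proof -
  define k where "k = nat \<lfloor>\<tau> / y\<rfloor>"
  have "real k = of_int \<lfloor>\<tau> / y\<rfloor>" unfolding k_def using \<tau> y by simp
  then have "real k \<le> \<tau> / y" "\<tau> / y < real k + 1"
    using of_int_floor_le[of "\<tau> / y"] real_of_int_floor_add_one_gt[of "\<tau> / y"] by linarith+
  then have k: "y * real k \<le> \<tau>" "\<tau> \<le> y * (real k + 1)"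
    using y by (simp_all add: field_simps)
  have "ln v * \<tau> - wphi_star \<omega> \<tau> \<le> ln v * (y * (real k + 1)) - wphi_star \<omega> (y * real k)"
    using k v y by (intro diff_mono mult_left_mono wphi_star_mono) auto
  also have "\<dots> = y * (\<Sum>l<k. ln v - log_wtheta y l) + y * ln v"
    using y by (simp add: sum_subtractf sum_log_wtheta algebra_simps)
  also have "(\<Sum>l<k. ln v - log_wtheta y l) \<le> (\<Sum>l<k. max 0 (ln v - log_wtheta y l))"
    by (intro sum_mono) auto
  also have "\<dots> \<le> assoc_weight y v"
    unfolding assoc_weight_def using y
    by (intro sum_le_suminf summable_max_0_diff_log_wtheta) auto
  finally show ?thesis using y by simp
qed

lemma omega_le_assoc_weight:
  assumes y: "y > 0"
  shows "\<exists>C\<ge>0. \<forall>v\<ge>1. \<omega> v \<le> 4 * y * assoc_weight y v + C"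
proof -
  obtain C where C: "\<And>v. v \<ge> 1 \<Longrightarrow> ln v \<le> \<omega> v / (4 * y) + C"
    using ln_le_omega[of "1 / (4 * y)"] y by auto
  have "\<omega> v \<le> 4 * y * assoc_weight y v + max 0 (4 * y * C + 2)" if v: "v \<ge> 1" for v
  proof -
    obtain \<tau> where \<tau>: "\<tau> \<ge> 0" and "\<omega> v \<le> 2 * (ln v * \<tau> - wphi_star \<omega> \<tau>) + 1"
      using omega_le_young_gap[OF v] by blast
    then have "\<omega> v \<le> 2 * (y * assoc_weight y v + y * ln v) + 1"
      using young_gap_le_assoc_weight[OF y \<tau> v] by (smt (verit))
    moreover have "y * ln v \<le> \<omega> v / 4 + y * C"
      using C[OF v] y by (simp add: field_simps)
    ultimately show ?thesis by (simp add: algebra_simps)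
  qed
  then show ?thesis by (intro exI[of _ "max 0 (4 * y * C + 2)"]) auto
qed

lemma omega_scaled_le_majorant:
  assumes y: "y > 0" and t: "t > 0" and C: "C \<ge> 0"
    and omega_le: "\<And>v. v \<ge> 1 \<Longrightarrow> \<omega> v \<le> 4 * y * assoc_weight y v + C"
  shows "ennreal (\<omega> (t * u) / u\<^sup>2) * indicator {1..} u \<le>
    ennreal (C / u\<^sup>2) * indicator {1..} u + ennreal (4 * y) *
      (\<Sum>l. \<Sum>j. ennreal (1 / u\<^sup>2) * indicator {max 1 (exp (log_wtheta y l + real j) / t)..} u)"
proof (cases "u \<ge> 1 \<and> t * u \<ge> 1")
  case False
  then have "u < 1 \<or> \<omega> (t * u) = 0" using t by (auto intro: omega_eq_0)
  then show ?thesis by auto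
next
  case True
  define v where "v = t * u"
  have u: "u \<ge> 1" and v: "v \<ge> 1" using True unfolding v_def by auto
  have count: "ennreal (max 0 (ln v - log_wtheta y l))
      \<le> (\<Sum>j. indicator {max 1 (exp (log_wtheta y l + real j) / t)..} u)" for l
  proof -
    have "real j \<le> ln v - log_wtheta y l \<longleftrightarrow> max 1 (exp (log_wtheta y l + real j) / t) \<le> u" for j
    proof -
      have "real j \<le> ln v - log_wtheta y l \<longleftrightarrow> exp (log_wtheta y l + real j) \<le> v"
        using v by (subst ln_ge_iff[symmetric]) auto
      also have "\<dots> \<longleftrightarrow> max 1 (exp (log_wtheta y l + real j) / t) \<le> u"
        using t u unfolding v_def by (simp add: divide_le_eq mult.commute)
      finally show ?thesis .
    qed
    then show ?thesis
      using ennreal_max_0_le_count[of "ln v - log_wtheta y l"] by (simp add: indicator_def of_bool_def)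
  qed
  have "ennreal (assoc_weight y v) = (\<Sum>l. ennreal (max 0 (ln v - log_wtheta y l)))"
    unfolding assoc_weight_def using y by (intro suminf_ennreal2[symmetric] summable_max_0_diff_log_wtheta) auto
  also have "\<dots> \<le> (\<Sum>l. \<Sum>j. indicator {max 1 (exp (log_wtheta y l + real j) / t)..} u)"
    using count by (intro suminf_le) auto
  finally have assoc: "ennreal (assoc_weight y v) \<le> \<dots>" .
  have "\<omega> v / u\<^sup>2 \<le> C / u\<^sup>2 + 4 * y * assoc_weight y v * (1 / u\<^sup>2)"
    using omega_le[OF v] u by (simp add: field_simps divide_right_mono)
  then have "ennreal (\<omega> v / u\<^sup>2) \<le> ennreal (C / u\<^sup>2) + ennreal (4 * y) * ennreal (assoc_weight y v) * ennreal (1 / u\<^sup>2)"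
    using C y assoc_weight_nonneg[OF y, of v]
    by (simp add: ennreal_mult[symmetric] ennreal_plus[symmetric] ennreal_leI del: ennreal_plus)
  also have "\<dots> \<le> ennreal (C / u\<^sup>2) + ennreal (4 * y) *
      ((\<Sum>l. \<Sum>j. indicator {max 1 (exp (log_wtheta y l + real j) / t)..} u) * ennreal (1 / u\<^sup>2))"
    using assoc by (simp add: mult.assoc add_left_mono mult_left_mono mult_right_mono)
  finally show ?thesis using u unfolding v_def by (simp add: mult.commute)
qed

end

section \<open>The tail condition\<close>

locale wtheta_tail_condition = normalized_weight_function +
  fixes x y A :: real
  assumes x_pos: "x > 0" and y_pos: "y > 0" and A_pos: "A > 0"
    and tail_le: "\<And>k::nat. k > 0 \<Longrightarrow>
      summable (\<lambda>l. 1 / wtheta \<omega> y (k + l)) \<and>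
      (\<Sum>l. 1 / wtheta \<omega> y (k + l)) \<le> A * real k / wtheta \<omega> x k"
begin

lemma min_1_exp_log_wtheta_summable_le:
  assumes t: "t > 0"
  shows "summable (\<lambda>l. min 1 (t * exp (- log_wtheta y l)))"
    and "(\<Sum>l. min 1 (t * exp (- log_wtheta y l))) \<le> (1 + A) * (\<omega> (exp 1 * t) / x) + A"
proof -
  obtain M where M: "\<And>l. log_wtheta x l \<le> ln t \<longleftrightarrow> l < M" and "x * real M \<le> \<omega> (exp 1 * t)"
    using log_wtheta_sublevel_index_le[OF x_pos t] by blast
  then have M_le: "real M \<le> \<omega> (exp 1 * t) / x" using x_pos by (simp add: field_simps)
  have "ln t < log_wtheta x M" using M[of M] by simp
  then have "t < exp (log_wtheta x M)" using t by (metis exp_less_cancel_iff exp_ln)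
  then have t_less: "t < wtheta \<omega> x (Suc M)" using wtheta_Suc[OF x_pos] by simp
  have shifted: "1 / wtheta \<omega> y (Suc M + i) = exp (- log_wtheta y (i + M))" for i
    using wtheta_Suc[OF y_pos, of "i + M"] by (simp add: exp_minus add.commute inverse_eq_divide)
  have tail_summable: "summable (\<lambda>i. exp (- log_wtheta y (i + M)))"
    and "(\<Sum>i. exp (- log_wtheta y (i + M))) \<le> A * real (Suc M) / wtheta \<omega> x (Suc M)"
    using conjunct1[OF tail_le[of "Suc M"]] conjunct2[OF tail_le[of "Suc M"]] unfolding shifted by simp_all
  then have "t * (\<Sum>i. exp (- log_wtheta y (i + M))) \<le> t * (A * real (Suc M) / wtheta \<omega> x (Suc M))"
    using t by (intro mult_left_mono) auto
  also have "\<dots> \<le> t * (A * real (Suc M) / t)"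
    using t t_less A_pos by (intro mult_left_mono divide_left_mono) auto
  also have "\<dots> = A * real (Suc M)" using t by simp
  finally have tail: "t * (\<Sum>i. exp (- log_wtheta y (i + M))) \<le> A * real (Suc M)" .
  define f where "f l = min 1 (t * exp (- log_wtheta y l))" for l
  have f_le: "f (i + M) \<le> t * exp (- log_wtheta y (i + M))" for i unfolding f_def by simp
  have f_shift_summable: "summable (\<lambda>i. f (i + M))"
  proof (rule summable_comparison_test)
    show "summable (\<lambda>i. t * exp (- log_wtheta y (i + M)))" by (rule summable_mult[OF tail_summable])
    show "\<exists>N. \<forall>i\<ge>N. norm (f (i + M)) \<le> t * exp (- log_wtheta y (i + M))"
      using f_le t by (auto simp: f_def)
  qed
  then have summable: "summable f" by (simp only: summable_iff_shift)
  then show "summable (\<lambda>l. min 1 (t * exp (- log_wtheta y l)))" using f_def[abs_def] by simp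
  have "suminf f = (\<Sum>i. f (i + M)) + (\<Sum>l<M. f l)"
    using summable by (rule suminf_split_initial_segment)
  also have "(\<Sum>i. f (i + M)) \<le> t * (\<Sum>i. exp (- log_wtheta y (i + M)))"
    unfolding suminf_mult[OF tail_summable, symmetric]
    by (rule suminf_le[OF f_le f_shift_summable summable_mult[OF tail_summable]])
  also have "(\<Sum>l<M. f l) \<le> real M"
    unfolding f_def using sum_mono[of "{..<M}" "\<lambda>l. min 1 (t * exp (- log_wtheta y l))" "\<lambda>_. 1"] by simp
  finally have "suminf f \<le> (1 + A) * real M + A" using tail by (simp add: algebra_simps)
  also have "\<dots> \<le> (1 + A) * (\<omega> (exp 1 * t) / x) + A"
    using M_le A_pos by (intro add_right_mono mult_left_mono) auto
  finally show "(\<Sum>l. min 1 (t * exp (- log_wtheta y l))) \<le> (1 + A) * (\<omega> (exp 1 * t) / x) + A"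
    unfolding f_def[abs_def] .
qed

lemma majorant_series_le:
  assumes t: "t > 0"
  shows "(\<Sum>l. \<Sum>j. ennreal (1 / max 1 (exp (log_wtheta y l + real j) / t)))
    \<le> ennreal (\<omega> (exp 1 * t) / y + 2 * ((1 + A) * (\<omega> (exp 1 * t) / x) + A))"
proof -
  define c where "c l = ln t - log_wtheta y l" for l
  define F where "F l = (\<Sum>j. min 1 (exp (c l - real j)))" for l
  define a where "a l = max 0 (ln (exp 1 * t) - log_wtheta y l)" for l
  define b where "b l = min 1 (t * exp (- log_wtheta y l))" for l
  have summand: "1 / max 1 (exp (log_wtheta y l + real j) / t) = min 1 (exp (c l - real j))" for l j
  proof -
    have "exp (c l - real j) = 1 / (exp (log_wtheta y l + real j) / t)"
      unfolding c_def using t by (simp add: exp_diff exp_add)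
    moreover have "exp (log_wtheta y l + real j) / t > 0" using t by simp
    ultimately show ?thesis by (auto simp: min_def max_def field_simps)
  qed
  have F_le: "F l \<le> a l + 2 * b l" for l
  proof -
    have "max 0 (c l + 1) = a l" unfolding a_def c_def using t by (simp add: ln_mult algebra_simps)
    moreover have "exp (c l) = t * exp (- log_wtheta y l)"
      unfolding c_def using t by (simp add: exp_diff exp_minus field_simps)
    ultimately show ?thesis
      using min_1_exp_diff_summable_le(2)[of "c l"] unfolding F_def b_def by simp
  qed
  have a_summable: "summable a" unfolding a_def using y_pos by (rule summable_max_0_diff_log_wtheta)
  have b_summable: "summable b" unfolding b_def by (rule min_1_exp_log_wtheta_summable_le(1)[OF t])
  have F_nonneg: "0 \<le> F l" for l
    unfolding F_def by (intro suminf_nonneg min_1_exp_diff_summable_le(1)) auto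
  have F_summable: "summable F"
    by (rule summable_comparison_test[OF _ summable_add[OF a_summable summable_mult[OF b_summable]]])
      (use F_le F_nonneg in auto)
  have "(\<Sum>l. \<Sum>j. ennreal (1 / max 1 (exp (log_wtheta y l + real j) / t))) = (\<Sum>l. ennreal (F l))"
    unfolding summand F_def
    by (intro suminf_cong suminf_ennreal2 min_1_exp_diff_summable_le(1)) auto
  also have "\<dots> = ennreal (suminf F)" using F_nonneg F_summable by (rule suminf_ennreal2)
  also have "suminf F \<le> suminf a + 2 * suminf b"
    using suminf_le[OF F_le F_summable summable_add[OF a_summable summable_mult[OF b_summable]]]
    unfolding suminf_add[OF a_summable summable_mult[OF b_summable], symmetric] suminf_mult[OF b_summable] .
  also have "suminf a \<le> \<omega> (exp 1 * t) / y"
    using assoc_weight_le_omega[OF y_pos, of "exp 1 * t"] t y_pos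
    unfolding a_def assoc_weight_def[symmetric] by (simp add: field_simps)
  also have "suminf b \<le> (1 + A) * (\<omega> (exp 1 * t) / x) + A"
    unfolding b_def by (rule min_1_exp_log_wtheta_summable_le(2)[OF t])
  finally show ?thesis by (simp add: ennreal_leI)
qed

lemma nn_integral_omega_scaled_le:
  shows "\<exists>K\<ge>0. \<forall>t>0. (\<integral>\<^sup>+ u. ennreal (\<omega> (t * u) / u\<^sup>2) * indicator {1..} u \<partial>lborel)
    \<le> ennreal (K * \<omega> (exp 1 * t) + K)"
proof -
  obtain C where C: "C \<ge> 0" "\<And>v. v \<ge> 1 \<Longrightarrow> \<omega> v \<le> 4 * y * assoc_weight y v + C"
    using omega_le_assoc_weight[OF y_pos] by blast
  define K where "K = C + 8 * y * A + 4 + 8 * y * (1 + A) / x"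
  have K: "K \<ge> 0" unfolding K_def using C x_pos y_pos A_pos by simp
  have "(\<integral>\<^sup>+ u. ennreal (\<omega> (t * u) / u\<^sup>2) * indicator {1..} u \<partial>lborel) \<le> ennreal (K * \<omega> (exp 1 * t) + K)"
    if t: "t > 0" for t
  proof -
    define W where "W = \<omega> (exp 1 * t)"
    have W: "W \<ge> 0" unfolding W_def using t by (simp add: omega_nonneg)
    have "(\<integral>\<^sup>+ u. ennreal (\<omega> (t * u) / u\<^sup>2) * indicator {1..} u \<partial>lborel)
      \<le> (\<integral>\<^sup>+ u. ennreal (C / u\<^sup>2) * indicator {1..} u + ennreal (4 * y) *
          (\<Sum>l. \<Sum>j. ennreal (1 / u\<^sup>2) * indicator {max 1 (exp (log_wtheta y l + real j) / t)..} u) \<partial>lborel)"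
      by (intro nn_integral_mono omega_scaled_le_majorant[OF y_pos t C])
    also have "\<dots> = ennreal C + ennreal (4 * y) *
        (\<Sum>l. \<Sum>j. ennreal (1 / max 1 (exp (log_wtheta y l + real j) / t)))"
      by (rule nn_integral_majorant) (use C in auto)
    also have "\<dots> \<le> ennreal C + ennreal (4 * y) * ennreal (W / y + 2 * ((1 + A) * (W / x) + A))"
      unfolding W_def by (intro add_left_mono mult_left_mono majorant_series_le[OF t]) auto
    also have "\<dots> = ennreal (C + 8 * y * A + (4 + 8 * y * (1 + A) / x) * W)"
      using C y_pos x_pos A_pos W by (simp add: ennreal_mult[symmetric] ennreal_plus[symmetric] field_simps del: ennreal_plus)
    also have "\<dots> \<le> ennreal (K * W + K)"
      unfolding K_def using C W x_pos y_pos A_pos by (intro ennreal_leI) (simp add: algebra_simps)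
    finally show ?thesis unfolding W_def .
  qed
  with K show ?thesis by blast
qed

end

theorem corollary5p12:
  fixes \<omega> :: "real \<Rightarrow> real"
  assumes "weight_function \<omega>" and "normalized_weight \<omega>"
    and "x > 0" and "y > 0" and "A > 0"
    and "\<And>k::nat. k > 0 \<Longrightarrow>
           summable (\<lambda>l. 1 / wtheta \<omega> y (k + l)) \<and>
           (\<Sum>l. 1 / wtheta \<omega> y (k + l)) \<le> A * real k / wtheta \<omega> x k"
  shows "strong_weight \<omega>"
proof -
  interpret wtheta_tail_condition \<omega> x y A using assms by unfold_locales
  obtain K where K: "K \<ge> 0" and integral_le: "\<And>t. t > 0 \<Longrightarrow>
      (\<integral>\<^sup>+ u. ennreal (\<omega> (t * u) / u\<^sup>2) * indicator {1..} u \<partial>lborel) \<le> ennreal (K * \<omega> (exp 1 * t) + K)"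
    using nn_integral_omega_scaled_le by blast
  obtain D where D: "D \<ge> 1" and omega_exp1: "\<And>v. v \<ge> 0 \<Longrightarrow> \<omega> (exp 1 * v) \<le> D * \<omega> v + D"
    using omega_exp1_mult_le by blast
  define C where "C = K * D + K + 1"
  have "K * \<omega> (exp 1 * t) + K \<le> C * \<omega> t + C" if t: "t > 0" for t
  proof -
    have "K * \<omega> (exp 1 * t) \<le> K * (D * \<omega> t + D)"
      using omega_exp1[of t] K t by (intro mult_left_mono) auto
    moreover have "0 \<le> \<omega> t" "0 \<le> K * \<omega> t" using K t by (simp_all add: omega_nonneg)
    ultimately show ?thesis unfolding C_def by (simp add: algebra_simps)
  qed
  moreover have "C > 0" unfolding C_def using K D by (simp add: add_nonneg_pos)
  ultimately show ?thesis
    unfolding strong_weight_def using integral_le by (meson ennreal_leI order_trans)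
qed

end
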